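(* Let $p$ be a binary word of length $l$ with $r\le 3$ runs. For every $n\ge l$ there exists a $p$-optimal binary word of length $n$ having exactly $r$ runs.
   Context: $c_p(w)$ is the number of occurrences of $p$ as a (not necessarily consecutive) subsequence of $w$. $M_{n,p}=\max\{c_p(w): w\in\{0,1\}^n\}$; a binary word $w$ of length $n$ is $p$-optimal if $c_p(w)=M_{n,p}$. A run is a maximal block of consecutive equal letters. *)

theory Defs
  imports Main
begin

text \<open>Binary words are lists of booleans (False = 0, True = 1).\<close>

definition subseq_count :: "bool list \<Rightarrow> bool list \<Rightarrow> nat" where
  "subseq_count p w = card {I. I \<subseteq> {0..<length w} \<and> card I = length p \<and> nths w I = p}"

definition max_count :: "nat \<Rightarrow> bool list \<Rightarrow> nat" where
  "max_count n p = Max {subseq_count p w | w. length w = n}"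

definition p_optimal :: "bool list \<Rightarrow> bool list \<Rightarrow> bool" where
  "p_optimal p w \<longleftrightarrow> subseq_count p w = max_count (length w) p"

definition runs :: "bool list \<Rightarrow> nat" where
  "runs w = length (remdups_adj w)"

end

theory Submission
  imports Defs
begin

text \<open>Write \<open>p = a\<^sup>i b\<^sup>j a\<^sup>k\<close> with \<open>b = \<not> a\<close>. Classifying the occurrences of \<open>p\<close> in a word \<open>w\<close>
  by the position of their first \<open>b\<close> splits each one into an occurrence of \<open>a\<^sup>i\<close> before that
  position and one of \<open>b\<^sup>j\<^sup>-\<^sup>1 a\<^sup>k\<close> after it. If \<open>w\<close> has \<open>s\<close> letters \<open>a\<close> and \<open>t\<close> letters \<open>b\<close>, this
  bounds the count by \<open>C(x,i) C(t,j) C(s-x,k)\<close> for some \<open>x \<le> s\<close>. The block word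
  \<open>a\<^sup>x b\<^sup>y a\<^sup>z\<close> attains \<open>C(x,i) C(y,j) C(z,k)\<close> exactly, so a block word maximising this
  product over \<open>x + y + z = n\<close> is \<open>p\<close>-optimal, and it has as many runs as \<open>p\<close>.\<close>

definition occurrences :: "'a list \<Rightarrow> 'a list \<Rightarrow> nat set set" where
  "occurrences p w = {I. I \<subseteq> {0..<length w} \<and> card I = length p \<and> nths w I = p}"

lemma subseq_count_eq_card_occurrences: "subseq_count p w = card (occurrences p w)"
  by (simp add: subseq_count_def occurrences_def)

lemma finite_occurrences: "finite (occurrences p w)"
  by (rule finite_subset[of _ "Pow {0..<length w}"]) (auto simp: occurrences_def)

lemma occurrences_Nil: "occurrences [] w = {{}}"
proof -
  have "I \<in> occurrences [] w \<longleftrightarrow> I = {}" for I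
  proof
    assume "I \<in> occurrences [] w"
    then have "I \<subseteq> {0..<length w}" "card I = 0"
      by (simp_all add: occurrences_def)
    then show "I = {}"
      by (metis card_0_eq finite_atLeastLessThan finite_subset)
  qed (simp add: occurrences_def)
  then show ?thesis by blast
qed

lemma occurrences_Cons_Nil: "occurrences (x # p) [] = {}"
  by (auto simp: occurrences_def)

lemma Suc_preimage: "{j. Suc j \<in> Suc ` J} = J" "{j. Suc j \<in> insert 0 (Suc ` J)} = J"
  by auto

lemma occurrences_Cons_Cons:
  "occurrences (x # p) (y # w) = image Suc ` occurrences (x # p) w \<union>
     (if x = y then (\<lambda>J. insert 0 (Suc ` J)) ` occurrences p w else {})"
  (is "?L = ?A \<union> ?B")
proof (intro equalityI subsetI)
  fix I assume I: "I \<in> ?L"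
  define J where "J = {j. Suc j \<in> I}"
  have J_sub: "J \<subseteq> {0..<length w}"
    using I by (auto simp: occurrences_def J_def)
  then have J: "J \<subseteq> {0..<length w}" "finite J"
    using finite_subset by blast+
  show "I \<in> ?A \<union> ?B"
  proof (cases "0 \<in> I")
    case True
    then have I_eq: "I = insert 0 (Suc ` J)"
      by (auto simp: J_def image_iff) (metis not0_implies_Suc)
    have "nths (y # w) I = y # nths w J"
      using True by (simp add: nths_Cons J_def)
    moreover have "card I = Suc (card J)"
      using I_eq J by (simp add: card_image)
    ultimately have "x = y" "J \<in> occurrences p w"
      using I J by (auto simp: occurrences_def)
    then show ?thesis
      using I_eq by auto
  next
    case False
    then have I_eq: "I = Suc ` J"
      by (auto simp: J_def image_iff) (metis not0_implies_Suc)
    have "nths (y # w) I = nths w J"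
      using False by (simp add: nths_Cons J_def)
    moreover have "card I = card J"
      using I_eq J by (simp add: card_image)
    ultimately have "J \<in> occurrences (x # p) w"
      using I J by (auto simp: occurrences_def)
    then show ?thesis
      using I_eq by auto
  qed
next
  fix I assume "I \<in> ?A \<union> ?B"
  then consider J where "J \<in> occurrences (x # p) w" "I = Suc ` J"
    | J where "J \<in> occurrences p w" "I = insert 0 (Suc ` J)" "x = y"
    by (auto split: if_splits)
  then show "I \<in> ?L"
  proof cases
    case (1 J)
    then have "finite J" "J \<subseteq> {0..<length w}" "card J = Suc (length p)" "nths w J = x # p"
      by (auto simp: occurrences_def intro: finite_subset)
    then show ?thesis
      using 1 by (auto simp: occurrences_def nths_Cons Suc_preimage card_image)
  next
    case (2 J)
    then have J: "finite J" "J \<subseteq> {0..<length w}" "card J = length p" "nths w J = p"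
      by (auto simp: occurrences_def intro: finite_subset)
    have "card I = Suc (length p)"
      using 2 J by (simp add: card_image)
    moreover have "nths (y # w) I = x # p"
      using 2 J by (simp add: nths_Cons Suc_preimage)
    moreover have "I \<subseteq> {0..<length (y # w)}"
      using 2 J by auto
    ultimately show ?thesis by (simp add: occurrences_def)
  qed
qed

lemma subseq_count_Nil [simp]: "subseq_count [] w = 1"
  by (simp add: subseq_count_eq_card_occurrences occurrences_Nil)

lemma subseq_count_Cons_Nil [simp]: "subseq_count (x # p) [] = 0"
  by (simp add: subseq_count_eq_card_occurrences occurrences_Cons_Nil)

lemma subseq_count_Cons_Cons [simp]:
  "subseq_count (x # p) (y # w) = subseq_count (x # p) w + (if x = y then subseq_count p w else 0)"
proof -
  have disjoint: "image Suc ` occurrences (x # p) w \<inter> (\<lambda>J. insert 0 (Suc ` J)) ` occurrences p w = {}"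
    by auto
  have "inj_on (image Suc) (occurrences (x # p) w)"
    by (simp add: inj_on_def inj_image_eq_iff)
  moreover have "inj_on (\<lambda>J. insert 0 (Suc ` J)) (occurrences p w)"
    by (rule inj_onI) (metis Suc_preimage(2))
  ultimately show ?thesis
    using disjoint unfolding subseq_count_eq_card_occurrences occurrences_Cons_Cons
    by (cases "x = y") (simp_all add: card_Un_disjoint finite_occurrences card_image)
qed

lemma count_list_replicate: "count_list (replicate n x) y = (if x = y then n else 0)"
  by (induction n) auto

lemma count_list_add_count_list_Not: "count_list w c + count_list w (\<not> c) = length w"
  by (induction w) auto

lemma subseq_count_le_Cons: "subseq_count p w \<le> subseq_count p (y # w)"
  by (cases p) auto

lemma subseq_count_append_eq_0:
  "subseq_count q w = 0 \<Longrightarrow> subseq_count (p @ q) w = 0"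
proof (induction w arbitrary: p)
  case Nil
  then show ?case by (cases q; cases p) auto
next
  case (Cons y w)
  have q: "subseq_count q w = 0"
    using Cons.prems subseq_count_le_Cons[of q w y] by simp
  show ?case
  proof (cases p)
    case Nil
    then show ?thesis using Cons.prems by simp
  next
    case (Cons x p')
    then show ?thesis using Cons.IH[OF q, of p] Cons.IH[OF q, of p'] by simp
  qed
qed

lemma subseq_count_eq_0_if_notin: "c \<in> set p \<Longrightarrow> c \<notin> set w \<Longrightarrow> subseq_count p w = 0"
proof (induction w arbitrary: p)
  case Nil
  then show ?case by (cases p) auto
next
  case (Cons y w)
  then show ?case by (cases p) auto
qed

lemma subseq_count_Cons_replicate_append:
  "c \<noteq> x \<Longrightarrow> subseq_count (x # p) (replicate n c @ w) = subseq_count (x # p) w"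
  by (induction n) auto

lemma subseq_count_replicate: "subseq_count (replicate i c) w = count_list w c choose i"
proof (induction w arbitrary: i)
  case Nil
  then show ?case by (cases i) auto
next
  case (Cons y w)
  show ?case
  proof (cases i)
    case 0
    then show ?thesis by simp
  next
    case (Suc i')
    then show ?thesis using Cons.IH[of i] Cons.IH[of i'] by (cases "y = c") simp_all
  qed
qed

lemma subseq_count_two_blocks_le:
  "subseq_count (replicate j c @ replicate k (\<not> c)) w
     \<le> (count_list w c choose j) * (count_list w (\<not> c) choose k)"
proof (induction w arbitrary: j)
  case Nil
  then show ?case by (cases j; cases k) auto
next
  case (Cons y w)
  show ?case
  proof (cases j)
    case 0
    then show ?thesis using subseq_count_replicate[of k "\<not> c" "y # w"] by simp
  next
    case (Suc j')
    show ?thesis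
    proof (cases "y = c")
      case True
      then show ?thesis
        using Cons.IH[of j] Cons.IH[of j'] Suc by (simp add: algebra_simps)
    next
      case False
      then have "subseq_count (replicate j c @ replicate k (\<not> c)) (y # w)
          = subseq_count (replicate j c @ replicate k (\<not> c)) w"
        using Suc by simp
      also have "\<dots> \<le> (count_list w c choose j) * (count_list w (\<not> c) choose k)"
        by (rule Cons.IH)
      also have "\<dots> \<le> (count_list (y # w) c choose j) * (count_list (y # w) (\<not> c) choose k)"
        using False by (auto intro!: mult_mono binomial_right_mono)
      finally show ?thesis .
    qed
  qed
qed

lemma subseq_count_append_Cons:
  "subseq_count (p @ c # q) w =
     (\<Sum>m<length w. if w ! m = c
        then subseq_count p (take m w) * subseq_count q (drop (Suc m) w) else 0)"
proof (induction w arbitrary: p)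
  case Nil
  then show ?case by (cases p) auto
next
  case (Cons y w)
  define S where "S r = (\<Sum>m<length w. if w ! m = c
      then subseq_count r (take m w) * subseq_count q (drop (Suc m) w) else 0)" for r
  have shift: "(\<Sum>m<length (y # w). if (y # w) ! m = c
        then subseq_count r (take m (y # w)) * subseq_count q (drop (Suc m) (y # w)) else 0)
      = (if y = c then subseq_count r [] * subseq_count q w else 0)
        + (\<Sum>m<length w. if w ! m = c
            then subseq_count r (y # take m w) * subseq_count q (drop (Suc m) w) else 0)" for r
    by (simp only: length_Cons sum.lessThan_Suc_shift nth_Cons_0 take_0 drop_Suc_Cons drop_0
        nth_Cons_Suc take_Suc_Cons)
  show ?case
  proof (cases p)
    case Nil
    then show ?thesis
      unfolding Nil shift using Cons.IH[of "[]"] by (simp cong: if_cong)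
  next
    case (Cons x p')
    have "(\<Sum>m<length w. if w ! m = c
        then subseq_count p (y # take m w) * subseq_count q (drop (Suc m) w) else 0)
      = S p + (if x = y then S p' else 0)"
      unfolding S_def Cons
      by (cases "x = y") (simp_all add: distrib_right sum.distrib[symmetric] if_distrib cong: if_cong)
    then show ?thesis
      unfolding shift Cons using Cons.IH[of "x # p'"] Cons.IH[of p'] by (simp add: S_def cong: if_cong)
  qed
qed

definition block_word :: "bool \<Rightarrow> nat \<Rightarrow> nat \<Rightarrow> nat \<Rightarrow> bool list" where
  "block_word a x y z = replicate x a @ replicate y (\<not> a) @ replicate z a"

lemma length_block_word [simp]: "length (block_word a x y z) = x + y + z"
  by (simp add: block_word_def)

lemma subseq_count_replicate_append_replicate_append:
  assumes "q = [] \<or> hd q \<noteq> c" and "subseq_count (c # q) w = 0"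
  shows "subseq_count (replicate i c @ q) (replicate x c @ w) = (x choose i) * subseq_count q w"
proof (induction x arbitrary: i)
  case 0
  have "subseq_count (replicate (Suc i') c @ q) w = 0" for i'
    using subseq_count_append_eq_0[OF assms(2), of "replicate i' c"]
    by (simp add: replicate_append_same[symmetric])
  then show ?case by (cases i) auto
next
  case (Suc x)
  show ?case
  proof (cases i)
    case 0
    then show ?thesis
      using assms(1) Suc.IH[of 0] by (cases q) auto
  next
    case (Suc i')
    then show ?thesis
      using Suc.IH[of i] Suc.IH[of i'] by (simp add: algebra_simps)
  qed
qed

lemma subseq_count_block_word:
  assumes "0 < j"
  shows "subseq_count (block_word a i j k) (block_word a x y z)
    = (x choose i) * (y choose j) * (z choose k)"
proof -
  have inner: "subseq_count (replicate j (\<not> a) @ replicate k a) (replicate y (\<not> a) @ replicate z a)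
      = (y choose j) * (z choose k)"
    by (subst subseq_count_replicate_append_replicate_append)
      (auto intro: subseq_count_eq_0_if_notin[of "\<not> a"]
        simp: hd_replicate subseq_count_replicate count_list_replicate)
  have "subseq_count (a # replicate j (\<not> a) @ replicate k a) (replicate y (\<not> a) @ replicate z a) = 0"
    using assms
    by (simp add: subseq_count_Cons_replicate_append subseq_count_eq_0_if_notin[of "\<not> a"])
  moreover have "hd (replicate j (\<not> a) @ replicate k a) \<noteq> a"
    using assms by (cases j) auto
  ultimately show ?thesis
    unfolding block_word_def
    by (simp add: subseq_count_replicate_append_replicate_append inner)
qed

lemma finite_has_maximizer:
  fixes f :: "'a \<Rightarrow> 'b::linorder"
  assumes "finite S" "S \<noteq> {}"
  obtains x where "x \<in> S" "\<And>y. y \<in> S \<Longrightarrow> f y \<le> f x"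
proof -
  have "Max (f ` S) \<in> f ` S"
    using assms by simp
  then obtain x where "x \<in> S" "f x = Max (f ` S)"
    by auto
  moreover have "f y \<le> Max (f ` S)" if "y \<in> S" for y
    using assms(1) that by simp
  ultimately show ?thesis
    using that by metis
qed

lemma subseq_count_three_blocks_le:
  assumes "0 < j"
  shows "\<exists>x\<le>count_list w a. subseq_count (block_word a i j k) w
    \<le> (x choose i) * (count_list w (\<not> a) choose j) * ((count_list w a - x) choose k)"
proof -
  define s where "s = count_list w a"
  define f where "f x = (x choose i) * ((s - x) choose k)" for x
  obtain x where x: "x \<le> s" and x_max: "\<And>x'. x' \<le> s \<Longrightarrow> f x' \<le> f x"
    using finite_has_maximizer[of "{..s}" f] by auto
  obtain j' where j: "j = Suc j'"
    using assms gr0_implies_Suc by blast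
  define q where "q = replicate j' (\<not> a) @ replicate k a"
  have p_eq: "block_word a i j k = replicate i a @ (\<not> a) # q"
    by (simp add: block_word_def q_def j)
  have term_le: "subseq_count (replicate i a) (take m w) * subseq_count q (drop (Suc m) w)
      \<le> f x * subseq_count (replicate j' (\<not> a)) (drop (Suc m) w)"
    if "m < length w" "w ! m = (\<not> a)" for m
  proof -
    define \<alpha> where "\<alpha> = count_list (take m w) a"
    define D where "D = drop (Suc m) w"
    have "w = take m w @ w ! m # D"
      using that(1) by (simp add: D_def id_take_nth_drop)
    then have "s = \<alpha> + count_list D a"
      using that(2) unfolding s_def \<alpha>_def by (metis count_list_append count_list.simps(2) add_0)
    then have "subseq_count (replicate i a) (take m w) * subseq_count q D
        \<le> (\<alpha> choose i) * ((count_list D (\<not> a) choose j') * ((s - \<alpha>) choose k))"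
      using subseq_count_two_blocks_le[of j' "\<not> a" k D]
      by (simp add: q_def subseq_count_replicate \<alpha>_def)
    also have "\<dots> = f \<alpha> * (count_list D (\<not> a) choose j')"
      by (simp add: f_def)
    also have "\<dots> \<le> f x * (count_list D (\<not> a) choose j')"
      using x_max \<open>s = \<alpha> + count_list D a\<close> by simp
    finally show ?thesis
      by (simp add: D_def subseq_count_replicate)
  qed
  have "subseq_count (block_word a i j k) w
      = (\<Sum>m<length w. if w ! m = (\<not> a)
          then subseq_count (replicate i a) (take m w) * subseq_count q (drop (Suc m) w) else 0)"
    unfolding p_eq by (rule subseq_count_append_Cons)
  also have "\<dots> \<le> (\<Sum>m<length w. if w ! m = (\<not> a)
      then f x * subseq_count (replicate j' (\<not> a)) (drop (Suc m) w) else 0)"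
    by (rule sum_mono) (simp add: term_le)
  also have "\<dots> = f x * subseq_count ([] @ (\<not> a) # replicate j' (\<not> a)) w"
    unfolding subseq_count_append_Cons by (simp add: sum_distrib_left if_distrib cong: if_cong)
  also have "\<dots> = f x * (count_list w (\<not> a) choose j)"
    using subseq_count_replicate[of j "\<not> a" w] by (simp add: j)
  finally show ?thesis
    using x unfolding f_def s_def by (auto simp: algebra_simps)
qed

lemma subseq_count_block_word_le:
  assumes "0 < j"
  shows "\<exists>x y z. x + y + z = length w \<and> (k = 0 \<longrightarrow> z = 0) \<and>
    subseq_count (block_word a i j k) w \<le> (x choose i) * (y choose j) * (z choose k)"
proof (cases "k = 0")
  case True
  then have "subseq_count (block_word a i j k) w
      \<le> (count_list w a choose i) * (count_list w (\<not> a) choose j)"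
    using subseq_count_two_blocks_le[of i a j w] by (simp add: block_word_def)
  then show ?thesis
    using True count_list_add_count_list_Not[of w a]
    by (intro exI[of _ "count_list w a"] exI[of _ "count_list w (\<not> a)"] exI[of _ 0]) simp
next
  case False
  obtain x where "x \<le> count_list w a" "subseq_count (block_word a i j k) w
      \<le> (x choose i) * (count_list w (\<not> a) choose j) * ((count_list w a - x) choose k)"
    using subseq_count_three_blocks_le[OF assms] by blast
  then show ?thesis
    using False count_list_add_count_list_Not[of w a]
    by (intro exI[of _ x] exI[of _ "count_list w (\<not> a)"] exI[of _ "count_list w a - x"]) simp
qed

lemma runs_replicate: "0 < i \<Longrightarrow> runs (replicate i a) = 1"
  by (simp add: runs_def remdups_adj_replicate)

lemma runs_replicate_append:
  assumes "0 < i" "q = [] \<or> hd q \<noteq> a"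
  shows "runs (replicate i a @ q) = Suc (runs q)"
  using assms remdups_adj_append'[of "replicate i a" q]
  by (auto simp: runs_def remdups_adj_replicate)

lemma runs_block_word:
  assumes "0 < x" "0 < y"
  shows "runs (block_word a x y z) = (if z = 0 then 2 else 3)"
  using assms by (simp add: block_word_def runs_replicate_append runs_replicate hd_append)

lemma split_first_run:
  assumes "p \<noteq> []"
  obtains i q where "0 < i" "p = replicate i (hd p) @ q" "q = [] \<or> hd q \<noteq> hd p"
proof
  let ?t = "takeWhile (\<lambda>x. x = hd p) p"
  show "0 < length ?t"
    using assms by (cases p) auto
  have "?t = replicate (length ?t) (hd p)"
    by (rule replicate_length_same[symmetric]) (auto dest: set_takeWhileD)
  then show "p = replicate (length ?t) (hd p) @ dropWhile (\<lambda>x. x = hd p) p"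
    by (metis takeWhile_dropWhile_id)
  show "dropWhile (\<lambda>x. x = hd p) p = [] \<or> hd (dropWhile (\<lambda>x. x = hd p) p) \<noteq> hd p"
    using hd_dropWhile by blast
qed

lemma block_word_if_runs_le_3:
  assumes "p \<noteq> []" "runs p \<le> 3"
  obtains a i j k where "0 < i" "p = block_word a i j k" "j = 0 \<longrightarrow> k = 0"
proof -
  define a where "a = hd p"
  obtain i q1 where i: "0 < i" and p: "p = replicate i a @ q1" and q1: "q1 = [] \<or> hd q1 \<noteq> a"
    using split_first_run[OF assms(1)] unfolding a_def .
  show ?thesis
  proof (cases "q1 = []")
    case True
    then show ?thesis
      using that[of i a 0 0] i p by (simp add: block_word_def)
  next
    case False
    then have hd_q1: "hd q1 = (\<not> a)"
      using q1 by simp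
    obtain j q2 where j: "0 < j" and q1_eq: "q1 = replicate j (\<not> a) @ q2"
        and q2: "q2 = [] \<or> hd q2 \<noteq> (\<not> a)"
      using split_first_run[OF False, unfolded hd_q1] .
    show ?thesis
    proof (cases "q2 = []")
      case True
      then show ?thesis
        using that[of i a j 0] i p q1_eq by (simp add: block_word_def)
    next
      case False
      then have hd_q2: "hd q2 = a"
        using q2 by simp
      obtain k q3 where k: "0 < k" and q2_eq: "q2 = replicate k a @ q3"
          and q3: "q3 = [] \<or> hd q3 \<noteq> a"
        using split_first_run[OF False, unfolded hd_q2] .
      have "runs p = 3 + runs q3"
        using i j k q1 q2 q3 \<open>q1 \<noteq> []\<close> \<open>q2 \<noteq> []\<close> unfolding p q1_eq q2_eq
        by (simp add: runs_replicate_append)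
      then have "q3 = []"
        using assms(2) by (simp add: runs_def)
      then show ?thesis
        using that[of i a j k] i j p q1_eq q2_eq by (simp add: block_word_def)
    qed
  qed
qed

lemma p_optimalI:
  assumes "\<And>w. length w = length W \<Longrightarrow> subseq_count p w \<le> subseq_count p W"
  shows "p_optimal p W"
proof -
  have "finite {w :: bool list. length w = length W}"
    using finite_lists_length_eq[of "UNIV :: bool set"] by simp
  then have "finite {subseq_count p w | w. length w = length W}"
    by (simp add: setcompr_eq_image)
  then show ?thesis
    unfolding p_optimal_def max_count_def using assms by (intro Max_eqI[symmetric]) auto
qed

lemma p_optimal_replicate: "p_optimal (replicate i a) (replicate n a)"
  by (rule p_optimalI)
    (auto simp: subseq_count_replicate count_list_replicate intro: binomial_right_mono count_le_length)

lemma p_optimal_block_word: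
  assumes "0 < j" "i + j + k \<le> n"
  obtains x y z where "x + y + z = n" "i \<le> x" "j \<le> y" "k = 0 \<longleftrightarrow> z = 0"
    "p_optimal (block_word a i j k) (block_word a x y z)"
proof -
  define T where "T = {(x, y, z). x + y + z = n \<and> (k = 0 \<longrightarrow> z = 0)}"
  define f where "f = (\<lambda>(x, y, z). (x choose i) * (y choose j) * (z choose k))"
  have "finite T"
    by (rule finite_subset[of _ "{0..n} \<times> {0..n} \<times> {0..n}"]) (auto simp: T_def)
  moreover have witness: "(i, n - i - k, k) \<in> T"
    using assms(2) by (auto simp: T_def)
  ultimately obtain x y z where xyz: "(x, y, z) \<in> T" and max: "\<And>t. t \<in> T \<Longrightarrow> f t \<le> f (x, y, z)"
    using finite_has_maximizer[of T f] by (metis prod_cases3 empty_iff)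
  have "0 < f (i, n - i - k, k)"
    using assms(2) by (simp add: f_def)
  then have "0 < f (x, y, z)"
    using max[OF witness] by linarith
  then have le: "i \<le> x" "j \<le> y" "k \<le> z"
    by (simp_all add: f_def)
  have "p_optimal (block_word a i j k) (block_word a x y z)"
  proof (rule p_optimalI)
    fix w :: "bool list"
    assume "length w = length (block_word a x y z)"
    then have "length w = n"
      using xyz by (simp add: T_def)
    then obtain t where "t \<in> T" "subseq_count (block_word a i j k) w \<le> f t"
      using subseq_count_block_word_le[OF assms(1), of w k a i] by (auto simp: T_def f_def)
    then show "subseq_count (block_word a i j k) w \<le> subseq_count (block_word a i j k) (block_word a x y z)"
      using max by (fastforce simp: subseq_count_block_word[OF assms(1)] f_def)
  qed
  then show ?thesis
    using that xyz le by (auto simp: T_def)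
qed

theorem mainTheorem8:
  fixes p :: "bool list" and n :: nat
  assumes "p \<noteq> []" and "runs p \<le> 3" and "n \<ge> length p"
  shows "\<exists>w. length w = n \<and> p_optimal p w \<and> runs w = runs p"
proof -
  obtain a i j k where i: "0 < i" and p: "p = block_word a i j k" and jk: "j = 0 \<longrightarrow> k = 0"
    using block_word_if_runs_le_3[OF assms(1,2)] .
  have n: "i + j + k \<le> n"
    using assms(3) by (simp add: p)
  show ?thesis
  proof (cases "j = 0")
    case True
    then have "p = replicate i a"
      using jk by (simp add: p block_word_def)
    then show ?thesis
      using p_optimal_replicate[of i a n] runs_replicate i n
      by (intro exI[of _ "replicate n a"]) simp
  next
    case False
    obtain x y z where xyz: "x + y + z = n" "i \<le> x" "j \<le> y" "k = 0 \<longleftrightarrow> z = 0"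
      and opt: "p_optimal p (block_word a x y z)"
      using p_optimal_block_word[of j i k n a] n False unfolding p by blast
    have "runs (block_word a x y z) = runs p"
      using i False xyz by (simp add: p runs_block_word)
    then show ?thesis
      using opt xyz(1) by (intro exI[of _ "block_word a x y z"]) simp
  qed
qed

end
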